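(* Let $G$ be a vertex-weighted multigraph and let $H$ be a spanning submultigraph of $G$. If $H$ is admissibly contractible, then so is $G$.
   Context: A vertex-weighted multigraph is a quadruple $G=(V,E,r,\mathrm{wt})$ with $V$ a finite set of vertices, $E$ a finite set of edges, $r$ assigning to each edge an unordered pair $\{v,w\}$ of distinct vertices (its endpoints), and $\mathrm{wt}:V\to\mathbb{Z}$. Two vertices are adjacent if some edge has them as endpoints. $\deg(v)=\#\{e\in E: v\in r(e)\}$ and $\mathrm{rdeg}(v)$ is the number of vertices adjacent to $v$. $G_1$ is a submultigraph of $G_2$ if there are injective maps $\phi:V_1\to V_2$, $\psi:E_1\to E_2$ with $r_2\circ\psi=\phi\circ r_1$ and $\mathrm{wt}_1\leq\mathrm{wt}_2\circ\phi$; it is spanning if moreover $\phi$ is bijective. For adjacent vertices $v,w$ of $G$, the contraction $G'$ of $G$ with respect to $\{v,w\}$ is obtained by identifying $v$ and $w$ to one vertex of weight $\mathrm{wt}(v)+\mathrm{wt}(w)$, deleting all edges between $v$ and $w$, keeping all other edges (with endpoints replaced via the identification) and all other weights. Let $m=\#\{e: r(e)=\{v,w\}\}$. The contraction is admissible if, for some labeling of the pair as $v,w$, there is an integer $0\leq l<m$ such that: every vertex $x\notin\{v,w\}$ has $\deg(x)\geq 3$; $\mathrm{wt}(v)\geq l+1$ and $\mathrm{wt}(w)\geq l+2$; $\deg(v)-m+l\geq 3$ and $\deg(w)-m+l\geq 3$. $G$ is admissibly contractible if there is a sequence $G=G_0,G_1,\dots,G_k$ with $G_k$ a single vertex and each $G_i$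 an admissible contraction of $G_{i-1}$. *)

theory Defs
  imports Main
begin

record ('v, 'e) mgraph =
  verts :: "'v set"
  edges :: "'e set"
  ends  :: "'e \<Rightarrow> 'v set"
  wt    :: "'v \<Rightarrow> int"

definition wf_mgraph :: "('v, 'e) mgraph \<Rightarrow> bool" where
  "wf_mgraph G \<longleftrightarrow> finite (verts G) \<and> finite (edges G) \<and>
     (\<forall>e\<in>edges G. \<exists>v w. v \<in> verts G \<and> w \<in> verts G \<and> v \<noteq> w \<and> ends G e = {v, w})"

definition adjacent :: "('v, 'e) mgraph \<Rightarrow> 'v \<Rightarrow> 'v \<Rightarrow> bool" where
  "adjacent G v w \<longleftrightarrow> (\<exists>e\<in>edges G. ends G e = {v, w}) \<and> v \<noteq> w"

definition deg :: "('v, 'e) mgraph \<Rightarrow> 'v \<Rightarrow> nat" where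
  "deg G v = card {e \<in> edges G. v \<in> ends G e}"

definition mult :: "('v, 'e) mgraph \<Rightarrow> 'v \<Rightarrow> 'v \<Rightarrow> nat" where
  "mult G v w = card {e \<in> edges G. ends G e = {v, w}}"

definition submgraph :: "('v1, 'e1) mgraph \<Rightarrow> ('v2, 'e2) mgraph \<Rightarrow> bool" where
  "submgraph G1 G2 \<longleftrightarrow> (\<exists>\<phi> \<psi>.
     inj_on \<phi> (verts G1) \<and> \<phi> ` verts G1 \<subseteq> verts G2 \<and>
     inj_on \<psi> (edges G1) \<and> \<psi> ` edges G1 \<subseteq> edges G2 \<and>
     (\<forall>e\<in>edges G1. ends G2 (\<psi> e) = \<phi> ` ends G1 e) \<and>
     (\<forall>x\<in>verts G1. wt G1 x \<le> wt G2 (\<phi> x)))"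

definition spanning_submgraph :: "('v1, 'e1) mgraph \<Rightarrow> ('v2, 'e2) mgraph \<Rightarrow> bool" where
  "spanning_submgraph G1 G2 \<longleftrightarrow> (\<exists>\<phi> \<psi>.
     bij_betw \<phi> (verts G1) (verts G2) \<and>
     inj_on \<psi> (edges G1) \<and> \<psi> ` edges G1 \<subseteq> edges G2 \<and>
     (\<forall>e\<in>edges G1. ends G2 (\<psi> e) = \<phi> ` ends G1 e) \<and>
     (\<forall>x\<in>verts G1. wt G1 x \<le> wt G2 (\<phi> x)))"

text \<open>Contraction w.r.t. {v,w}: w is identified with v (the merged vertex keeps the name v).
  This realises the contraction up to isomorphism.\<close>
definition contract :: "('v, 'e) mgraph \<Rightarrow> 'v \<Rightarrow> 'v \<Rightarrow> ('v, 'e) mgraph" where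
  "contract G v w =
     \<lparr> verts = verts G - {w},
       edges = {e \<in> edges G. ends G e \<noteq> {v, w}},
       ends = (\<lambda>e. (\<lambda>x. if x = w then v else x) ` ends G e),
       wt = (wt G)(v := wt G v + wt G w) \<rparr>"

definition adm_cond :: "('v, 'e) mgraph \<Rightarrow> 'v \<Rightarrow> 'v \<Rightarrow> int \<Rightarrow> bool" where
  "adm_cond G v w l \<longleftrightarrow>
     0 \<le> l \<and> l < int (mult G v w) \<and>
     (\<forall>x\<in>verts G - {v, w}. deg G x \<ge> 3) \<and>
     wt G v \<ge> l + 1 \<and> wt G w \<ge> l + 2 \<and>
     int (deg G v) - int (mult G v w) + l \<ge> 3 \<and>
     int (deg G w) - int (mult G v w) + l \<ge> 3"

definition adm_step :: "('v, 'e) mgraph \<Rightarrow> ('v, 'e) mgraph \<Rightarrow> bool" where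
  "adm_step G G' \<longleftrightarrow> (\<exists>v w. v \<in> verts G \<and> w \<in> verts G \<and> adjacent G v w \<and>
      (\<exists>l. adm_cond G v w l \<or> adm_cond G w v l) \<and> G' = contract G v w)"

definition adm_contractible :: "('v, 'e) mgraph \<Rightarrow> bool" where
  "adm_contractible G \<longleftrightarrow> (\<exists>G'. adm_step\<^sup>*\<^sup>* G G' \<and> card (verts G') = 1)"

end

theory Submission
  imports Defs
begin

text \<open>Every admissible contraction of \<open>H\<close> at \<open>{v, w}\<close> is mirrored by the contraction of \<open>G\<close>
  at the image pair. The admissibility inequalities transfer because \<open>G\<close> has at least as many
  edges at each vertex and between each pair, weights only grow, and \<open>deg v - mult v w\<close> counts
  the edges at \<open>v\<close> not joining \<open>v\<close> and \<open>w\<close>, which also only grow. Both contractions are again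
  related as spanning submultigraph and multigraph, so a whole contraction sequence of \<open>H\<close> lifts
  to one of \<open>G\<close> ending in a single vertex.\<close>

lemma deg_eq_mult_plus_card_other_edges:
  assumes "finite (edges K)"
  shows "deg K x = mult K x y + card {e \<in> edges K. x \<in> ends K e \<and> ends K e \<noteq> {x, y}}"
proof -
  have "{e \<in> edges K. x \<in> ends K e} =
      {e \<in> edges K. ends K e = {x, y}} \<union> {e \<in> edges K. x \<in> ends K e \<and> ends K e \<noteq> {x, y}}"
    by auto
  moreover have "card ({e \<in> edges K. ends K e = {x, y}} \<union>
        {e \<in> edges K. x \<in> ends K e \<and> ends K e \<noteq> {x, y}})
      = mult K x y + card {e \<in> edges K. x \<in> ends K e \<and> ends K e \<noteq> {x, y}}"
    unfolding mult_def by (rule card_Un_disjoint) (use assms in auto)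
  ultimately show ?thesis unfolding deg_def by simp
qed

locale spanning_embedding =
  fixes H :: "('w, 'f) mgraph" and G :: "('v, 'e) mgraph"
    and \<phi> :: "'w \<Rightarrow> 'v" and \<psi> :: "'f \<Rightarrow> 'e"
  assumes bij: "bij_betw \<phi> (verts H) (verts G)"
    and inj_edges: "inj_on \<psi> (edges H)"
    and edges_into: "\<psi> ` edges H \<subseteq> edges G"
    and ends_map: "\<And>e. e \<in> edges H \<Longrightarrow> ends G (\<psi> e) = \<phi> ` ends H e"
    and wt_le: "\<And>x. x \<in> verts H \<Longrightarrow> wt H x \<le> wt G (\<phi> x)"
    and finite_edges: "finite (edges G)"
    and ends_in_verts: "\<And>e. e \<in> edges H \<Longrightarrow> ends H e \<subseteq> verts H"
begin

lemma inj: "inj_on \<phi> (verts H)"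
  using bij bij_betw_def by blast

lemma finite_edges_H: "finite (edges H)"
  using finite_imageD[OF finite_subset[OF edges_into finite_edges] inj_edges] .

lemma ends_ne_pair_lift:
  assumes "e \<in> edges H" "a \<in> verts H" "b \<in> verts H" "ends H e \<noteq> {a, b}"
  shows "ends G (\<psi> e) \<noteq> {\<phi> a, \<phi> b}"
proof
  assume "ends G (\<psi> e) = {\<phi> a, \<phi> b}"
  then have "\<phi> ` ends H e = \<phi> ` {a, b}"
    using ends_map assms(1) by simp
  moreover have "ends H e \<union> {a, b} \<subseteq> verts H"
    using ends_in_verts assms by auto
  ultimately show False
    using inj_on_image_eq_iff[OF inj_on_subset[OF inj]] assms(4) by blast
qed

lemma card_edges_le:
  assumes "\<And>e. e \<in> edges H \<Longrightarrow> P e \<Longrightarrow> Q (\<psi> e)"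
  shows "card {e \<in> edges H. P e} \<le> card {e \<in> edges G. Q e}"
  by (rule card_inj_on_le[OF inj_on_subset[OF inj_edges]]) (use assms edges_into finite_edges in auto)

lemma deg_le: "deg H x \<le> deg G (\<phi> x)"
  unfolding deg_def by (rule card_edges_le) (simp add: ends_map)

lemma mult_le: "mult H a b \<le> mult G (\<phi> a) (\<phi> b)"
  unfolding mult_def by (rule card_edges_le) (simp add: ends_map)

lemma deg_minus_mult_le:
  assumes "a \<in> verts H" "b \<in> verts H"
  shows "int (deg H a) - int (mult H a b) \<le> int (deg G (\<phi> a)) - int (mult G (\<phi> a) (\<phi> b))"
proof -
  have "card {e \<in> edges H. a \<in> ends H e \<and> ends H e \<noteq> {a, b}}
      \<le> card {e \<in> edges G. \<phi> a \<in> ends G e \<and> ends G e \<noteq> {\<phi> a, \<phi> b}}"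
    by (rule card_edges_le) (use ends_map ends_ne_pair_lift assms in auto)
  then show ?thesis
    using deg_eq_mult_plus_card_other_edges[OF finite_edges_H, of a b]
      deg_eq_mult_plus_card_other_edges[OF finite_edges, of "\<phi> a" "\<phi> b"] by simp
qed

lemma adm_cond_lift:
  assumes "a \<in> verts H" "b \<in> verts H" "adm_cond H a b l"
  shows "adm_cond G (\<phi> a) (\<phi> b) l"
proof -
  have deg3: "\<forall>y\<in>verts G - {\<phi> a, \<phi> b}. deg G y \<ge> 3"
  proof
    fix y assume y: "y \<in> verts G - {\<phi> a, \<phi> b}"
    have "y \<in> \<phi> ` verts H"
      using y bij_betw_imp_surj_on[OF bij] by simp
    then obtain x where "x \<in> verts H" "y = \<phi> x" by blast
    with y have "x \<in> verts H - {a, b}" by auto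
    with assms(3) have "deg H x \<ge> 3" unfolding adm_cond_def by blast
    with deg_le[of x] \<open>y = \<phi> x\<close> show "deg G y \<ge> 3" by simp
  qed
  have mult_sym: "mult G (\<phi> b) (\<phi> a) = mult G (\<phi> a) (\<phi> b)" "mult H b a = mult H a b"
    unfolding mult_def by (simp_all add: insert_commute)
  have "0 \<le> l" "l < int (mult H a b)" "wt H a \<ge> l + 1" "wt H b \<ge> l + 2"
    "int (deg H a) - int (mult H a b) + l \<ge> 3" "int (deg H b) - int (mult H a b) + l \<ge> 3"
    using assms(3) unfolding adm_cond_def by auto
  with deg3 mult_sym mult_le[of a b] deg_minus_mult_le[OF assms(1,2)] deg_minus_mult_le[OF assms(2,1)]
    wt_le[OF assms(1)] wt_le[OF assms(2)]
  show ?thesis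
    unfolding adm_cond_def by (intro conjI) linarith+
qed

lemma adjacent_lift:
  assumes "adjacent H a b" "a \<in> verts H" "b \<in> verts H"
  shows "adjacent G (\<phi> a) (\<phi> b)"
proof -
  obtain e where "e \<in> edges H" "ends H e = {a, b}" "a \<noteq> b"
    using assms(1) unfolding adjacent_def by blast
  moreover have "\<phi> a \<noteq> \<phi> b"
    using \<open>a \<noteq> b\<close> inj assms(2,3) inj_on_eq_iff by metis
  ultimately show ?thesis
    using edges_into ends_map unfolding adjacent_def by (intro conjI bexI[of _ "\<psi> e"]) auto
qed

lemma contract_embedding:
  assumes v: "v \<in> verts H" and w: "w \<in> verts H" and "v \<noteq> w"
  shows "spanning_embedding (contract H v w) (contract G (\<phi> v) (\<phi> w)) \<phi> \<psi>"
proof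
  have "\<phi> ` (verts H - {w}) = verts G - {\<phi> w}"
    using inj_on_image_set_diff[OF inj, of "verts H" "{w}"] w bij bij_betw_imp_surj_on by force
  then show "bij_betw \<phi> (verts (contract H v w)) (verts (contract G (\<phi> v) (\<phi> w)))"
    unfolding contract_def bij_betw_def using inj_on_subset[OF inj] by simp
  show "inj_on \<psi> (edges (contract H v w))"
    unfolding contract_def using inj_on_subset[OF inj_edges] by simp
  show "\<psi> ` edges (contract H v w) \<subseteq> edges (contract G (\<phi> v) (\<phi> w))"
    unfolding contract_def using edges_into ends_ne_pair_lift[OF _ v w] by auto
  show "finite (edges (contract G (\<phi> v) (\<phi> w)))"
    unfolding contract_def using finite_edges by simp
  show "ends (contract H v w) e \<subseteq> verts (contract H v w)" if "e \<in> edges (contract H v w)" for e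
    using that ends_in_verts v \<open>v \<noteq> w\<close> unfolding contract_def by auto
  show "ends (contract G (\<phi> v) (\<phi> w)) (\<psi> e) = \<phi> ` ends (contract H v w) e"
    if "e \<in> edges (contract H v w)" for e
  proof -
    have e: "e \<in> edges H" using that unfolding contract_def by simp
    have merge: "(if \<phi> x = \<phi> w then \<phi> v else \<phi> x) = \<phi> (if x = w then v else x)"
      if "x \<in> verts H" for x
      using that inj w inj_on_eq_iff by metis
    have "ends (contract G (\<phi> v) (\<phi> w)) (\<psi> e) = (\<lambda>x. if \<phi> x = \<phi> w then \<phi> v else \<phi> x) ` ends H e"
      unfolding contract_def using ends_map[OF e] by (simp only: mgraph.select_convs image_image)
    also have "\<dots> = (\<lambda>x. \<phi> (if x = w then v else x)) ` ends H e"
      by (rule image_cong[OF refl]) (use merge ends_in_verts[OF e] in blast)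
    also have "\<dots> = \<phi> ` ends (contract H v w) e"
      unfolding contract_def by (simp only: mgraph.select_convs image_image)
    finally show ?thesis .
  qed
  show "wt (contract H v w) x \<le> wt (contract G (\<phi> v) (\<phi> w)) (\<phi> x)"
    if "x \<in> verts (contract H v w)" for x
  proof -
    have x: "x \<in> verts H" "x \<noteq> w" using that unfolding contract_def by auto
    show ?thesis
    proof (cases "x = v")
      case True
      then show ?thesis unfolding contract_def using wt_le v w by (simp add: add_mono)
    next
      case False
      then have "\<phi> x \<noteq> \<phi> v" using inj x v inj_on_eq_iff by metis
      then show ?thesis unfolding contract_def using wt_le x False by simp
    qed
  qed
qed

lemma adm_step_lift:
  assumes "adm_step H H'"
  obtains G' where "adm_step G G'" and "spanning_embedding H' G' \<phi> \<psi>"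
proof -
  obtain v w l where v: "v \<in> verts H" and w: "w \<in> verts H" and adj: "adjacent H v w"
    and cond: "adm_cond H v w l \<or> adm_cond H w v l" and H': "H' = contract H v w"
    using assms unfolding adm_step_def by blast
  have "\<phi> v \<in> verts G" "\<phi> w \<in> verts G"
    using v w bij_betw_apply[OF bij] by auto
  moreover have "adm_cond G (\<phi> v) (\<phi> w) l \<or> adm_cond G (\<phi> w) (\<phi> v) l"
    using cond adm_cond_lift v w by blast
  ultimately have "adm_step G (contract G (\<phi> v) (\<phi> w))"
    unfolding adm_step_def using adjacent_lift[OF adj v w] by blast
  moreover have "v \<noteq> w" using adj unfolding adjacent_def by simp
  ultimately show ?thesis
    using that contract_embedding[OF v w] H' by blast
qed

end

lemma adm_steps_lift:
  assumes "adm_step\<^sup>*\<^sup>* H H'" and "spanning_embedding H G \<phi> \<psi>"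
  shows "\<exists>G'. adm_step\<^sup>*\<^sup>* G G' \<and> spanning_embedding H' G' \<phi> \<psi>"
  using assms(1)
proof induction
  case base
  then show ?case using assms(2) by blast
next
  case (step H1 H2)
  then obtain G1 where "adm_step\<^sup>*\<^sup>* G G1" "spanning_embedding H1 G1 \<phi> \<psi>" by blast
  with spanning_embedding.adm_step_lift[OF _ step(2)] show ?case
    by (meson rtranclp.rtrancl_into_rtrancl)
qed

lemma spanning_submgraph_embedding:
  assumes "wf_mgraph G" "wf_mgraph H" "spanning_submgraph H G"
  obtains \<phi> \<psi> where "spanning_embedding H G \<phi> \<psi>"
proof -
  obtain \<phi> \<psi> where "bij_betw \<phi> (verts H) (verts G)" "inj_on \<psi> (edges H)"
    "\<psi> ` edges H \<subseteq> edges G" "\<forall>e\<in>edges H. ends G (\<psi> e) = \<phi> ` ends H e"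
    "\<forall>x\<in>verts H. wt H x \<le> wt G (\<phi> x)"
    using assms(3) unfolding spanning_submgraph_def by blast
  moreover have "finite (edges G)"
    using assms(1) unfolding wf_mgraph_def by simp
  moreover have "ends H e \<subseteq> verts H" if "e \<in> edges H" for e
    using assms(2) that unfolding wf_mgraph_def by fastforce
  ultimately have "spanning_embedding H G \<phi> \<psi>"
    by (simp add: spanning_embedding_def)
  then show ?thesis by (rule that)
qed

theorem lemma3p4:
  fixes G :: "('v, 'e) mgraph" and H :: "('w, 'f) mgraph"
  assumes "wf_mgraph G" and "wf_mgraph H"
    and "spanning_submgraph H G"
    and "adm_contractible H"
  shows "adm_contractible G"
proof -
  obtain \<phi> \<psi> where emb: "spanning_embedding H G \<phi> \<psi>"
    using spanning_submgraph_embedding[OF assms(1-3)] .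
  obtain H' where H': "adm_step\<^sup>*\<^sup>* H H'" "card (verts H') = 1"
    using assms(4) unfolding adm_contractible_def by blast
  obtain G' where G': "adm_step\<^sup>*\<^sup>* G G'" "spanning_embedding H' G' \<phi> \<psi>"
    using adm_steps_lift[OF H'(1) emb] by blast
  have "card (verts G') = card (verts H')"
    using bij_betw_same_card[OF spanning_embedding.bij[OF G'(2)]] by simp
  with G'(1) H'(2) show ?thesis
    unfolding adm_contractible_def by auto
qed

end
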